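(* Let $c\in(0,1)$ and let $(G,\phi)=(V,\vec E,\phi)$ be an infinite rooted directed random graph with in-degrees $(d_j^-)$ and out-degrees $(d_j^+)$ which arises as the local weak limit of a sequence $(G_n)$ of directed graphs, and let $R_\phi$ denote the limiting (in distribution) root-PageRank. For $\alpha>0$ let $d_\phi^{(-,\ge\alpha)}=\#\{j: j\to\phi,\ d_j^+\ge\alpha\}$. Assume there are $\alpha>0$ and $\varepsilon>0$ such that, as $k\to\infty$, $$\mathbb{P}\big(d_\phi^->k,\ d_\phi^{(-,\ge\alpha)}\ge(1-\varepsilon)d_\phi^-\big)=o\big(\mathbb{P}(d_\phi^->k)\big).$$ Then $$\mathbb{P}(R_\phi>k)\ge(1+o(1))\,\mathbb{P}\Big(d_\phi^->\frac{\alpha k}{\varepsilon c(1-c)}\Big)\qquad\text{as }k\to\infty.$$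
   Context: For a finite directed graph $G_n$ with out-degrees $d_i^+\ge1$, $p_{ij}=a_{ij}/d_i^+$ ($a_{ij}=1$ iff there is an edge $i\to j$) and PageRank $\boldsymbol{R}$ solves $\boldsymbol{R}=c\boldsymbol{R}\boldsymbol{P}+(1-c)\boldsymbol{1}$. Local weak convergence for directed graphs is taken in the sense where one considers the in-components of a uniformly chosen root and keeps out-degrees of vertices as marks; the limiting root-PageRank $R_\phi$ is the distributional limit of $R^{(G_n)}_{\phi_n}$ for uniform $\phi_n$, and equals $(1-c)\sum_{s\ge0}c^s\sum_{j}(\boldsymbol{P}^s)_{j\phi}$ with $p_{ij}=a_{ij}/d_i^+$ computed on $(G,\phi)$. $j\to\phi$ means there is a directed edge from $j$ to $\phi$. *)

theory Defs
  imports "HOL-Probability.Probability" "HOL-Library.Landau_Symbols"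
begin

text \<open>Marked graphs carry an out-degree mark D j (in the limit object the out-degree
  is a mark, not computed from the edges of the in-component).\<close>

definition outdeg :: "(nat \<Rightarrow> nat \<Rightarrow> bool) \<Rightarrow> nat \<Rightarrow> nat" where
  "outdeg E i = card {j. E i j}"

definition indeg :: "(nat \<Rightarrow> nat \<Rightarrow> bool) \<Rightarrow> nat \<Rightarrow> nat" where
  "indeg E j = card {i. E i j}"

definition indeg_ge :: "(nat \<Rightarrow> nat \<Rightarrow> bool) \<Rightarrow> (nat \<Rightarrow> nat) \<Rightarrow> real \<Rightarrow> nat \<Rightarrow> nat" where
  "indeg_ge E D \<alpha> v = card {j. E j v \<and> real (D j) \<ge> \<alpha>}"

fun walkers :: "(nat \<Rightarrow> nat \<Rightarrow> bool) \<Rightarrow> nat \<Rightarrow> nat \<Rightarrow> nat set" where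
  "walkers E v 0 = {v}"
| "walkers E v (Suc s) = {j. \<exists>k\<in>walkers E v s. E j k}"

text \<open>pw E D v s j = (P^s)_{j v} with p_{jk} = a_{jk} / D j\<close>
fun pw :: "(nat \<Rightarrow> nat \<Rightarrow> bool) \<Rightarrow> (nat \<Rightarrow> nat) \<Rightarrow> nat \<Rightarrow> nat \<Rightarrow> nat \<Rightarrow> real" where
  "pw E D v 0 j = (if j = v then 1 else 0)"
| "pw E D v (Suc s) j = (\<Sum>k\<in>{k\<in>walkers E v s. E j k}. pw E D v s k) / real (D j)"

definition root_pagerank :: "real \<Rightarrow> (nat \<Rightarrow> nat \<Rightarrow> bool) \<Rightarrow> (nat \<Rightarrow> nat) \<Rightarrow> nat \<Rightarrow> ennreal" where
  "root_pagerank c E D v =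
     ennreal (1 - c) * (\<Sum>s. ennreal (c ^ s * (\<Sum>j\<in>walkers E v s. pw E D v s j)))"

definition in_ball :: "(nat \<Rightarrow> nat \<Rightarrow> bool) \<Rightarrow> nat \<Rightarrow> nat \<Rightarrow> nat set" where
  "in_ball E v r = (\<Union>s\<le>r. walkers E v s)"

definition ball_iso :: "(nat \<Rightarrow> nat \<Rightarrow> bool) \<Rightarrow> (nat \<Rightarrow> nat) \<Rightarrow> nat \<Rightarrow>
    (nat \<Rightarrow> nat \<Rightarrow> bool) \<Rightarrow> (nat \<Rightarrow> nat) \<Rightarrow> nat \<Rightarrow> nat \<Rightarrow> bool" where
  "ball_iso E D v E' D' v' r \<longleftrightarrow>
     (\<exists>f. bij_betw f (in_ball E v r) (in_ball E' v' r) \<and> f v = v' \<and>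
          (\<forall>u\<in>in_ball E v r. D' (f u) = D u) \<and>
          (\<forall>u\<in>in_ball E v r. \<forall>w\<in>in_ball E v r. E u w \<longleftrightarrow> E' (f u) (f w)))"

definition local_weak_limit ::
  "'w measure \<Rightarrow> ('w \<Rightarrow> nat \<Rightarrow> nat \<Rightarrow> bool) \<Rightarrow> ('w \<Rightarrow> nat \<Rightarrow> nat) \<Rightarrow> ('w \<Rightarrow> nat) \<Rightarrow>
   (nat \<Rightarrow> nat) \<Rightarrow> (nat \<Rightarrow> nat \<Rightarrow> nat \<Rightarrow> bool) \<Rightarrow> bool" where
  "local_weak_limit M E D \<phi> N A \<longleftrightarrow>
     (\<forall>n. N n \<ge> 1 \<and> (\<forall>i j. A n i j \<longrightarrow> i < N n \<and> j < N n) \<and>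
          (\<forall>i<N n. outdeg (A n) i \<ge> 1)) \<and>
     (\<forall>r E' D' v'. finite (in_ball E' v' r) \<longrightarrow>
        (\<lambda>n. real (card {v\<in>{..<N n}. ball_iso (A n) (outdeg (A n)) v E' D' v' r}) / real (N n))
          \<longlonglongrightarrow> measure M {\<omega>\<in>space M. ball_iso (E \<omega>) (D \<omega>) (\<phi> \<omega>) E' D' v' r})"

end

theory Submission
  imports Defs
begin

text \<open>If fewer than \<open>(1 - \<epsilon>) d\<^sup>-\<^sub>\<phi>\<close> in-neighbours of the root have out-degree at least \<open>\<alpha>\<close>,
  then more than \<open>\<epsilon> d\<^sup>-\<^sub>\<phi>\<close> of them contribute at least \<open>1 / \<alpha>\<close> each, so
  \<open>R\<^sub>\<phi> > \<epsilon> c (1 - c) d\<^sup>-\<^sub>\<phi> / \<alpha>\<close>, which exceeds \<open>k\<close> once \<open>d\<^sup>-\<^sub>\<phi> > K = \<alpha> k / (\<epsilon> c (1 - c))\<close>.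
  Hence \<open>P(R\<^sub>\<phi> > k)\<close> is at least \<open>P(d\<^sup>-\<^sub>\<phi> > K)\<close> minus the probability in the hypothesis
  evaluated at \<open>K\<close>, which is \<open>o(P(d\<^sup>-\<^sub>\<phi> > K))\<close>.
  The argument concerns the limit object only.\<close>

lemma walkers_finite:
  assumes "\<And>j. finite {i. E i j}"
  shows "finite (walkers E v s)"
proof (induction s)
  case (Suc s)
  have "walkers E v (Suc s) = (\<Union>k\<in>walkers E v s. {j. E j k})" by auto
  then show ?case using Suc assms by simp
qed simp

lemma pw_eq_0_outside_walkers: "j \<notin> walkers E v s \<Longrightarrow> pw E D v s j = 0"
proof (induction s arbitrary: j)
  case (Suc s)
  then have "{k\<in>walkers E v s. E j k} = {}" by auto
  then show ?case unfolding pw.simps by (simp only: sum.empty div_0)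
qed simp

lemma pw_nonneg: "pw E D v s j \<ge> 0"
  by (induction s arbitrary: j) (auto intro!: sum_nonneg divide_nonneg_nonneg)

lemma pw_Suc_0: "E j v \<Longrightarrow> pw E D v (Suc 0) j = 1 / real (D j)"
proof -
  assume "E j v"
  then have "{k \<in> walkers E v 0. E j k} = {v}" by auto
  then show ?thesis by simp
qed

lemma root_pagerank_ge_first_step:
  assumes "0 \<le> c" "c \<le> 1"
  shows "ennreal ((1 - c) * c * (\<Sum>j\<in>{j. E j v}. 1 / real (D j))) \<le> root_pagerank c E D v"
proof -
  let ?term = "\<lambda>s. ennreal (c ^ s * (\<Sum>j\<in>walkers E v s. pw E D v s j))"
  have "walkers E v 1 = {j. E j v}" by simp
  then have "(\<Sum>j\<in>walkers E v 1. pw E D v 1 j) = (\<Sum>j\<in>{j. E j v}. 1 / real (D j))"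
    using pw_Suc_0 by (intro sum.cong) auto
  then have "ennreal ((1 - c) * c * (\<Sum>j\<in>{j. E j v}. 1 / real (D j))) = ennreal (1 - c) * ?term 1"
    using assms by (simp add: ennreal_mult[symmetric] mult.assoc sum_nonneg)
  also have "\<dots> \<le> ennreal (1 - c) * (\<Sum>s. ?term s)"
    using sum_le_suminf[OF summableI, of "{1}" ?term] by (intro mult_left_mono) auto
  finally show ?thesis unfolding root_pagerank_def .
qed

lemma indeg_eq_card_low_plus_indeg_ge:
  assumes "finite {j. E j v}"
  shows "indeg E v = card {j. E j v \<and> real (D j) < \<alpha>} + indeg_ge E D \<alpha> v"
proof -
  let ?low = "{j. E j v \<and> real (D j) < \<alpha>}" and ?high = "{j. E j v \<and> \<alpha> \<le> real (D j)}"
  have "card (?low \<union> ?high) = card ?low + card ?high"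
    by (intro card_Un_disjoint) (auto intro: finite_subset[OF _ assms])
  moreover have "?low \<union> ?high = {j. E j v}" by auto
  ultimately show ?thesis unfolding indeg_def indeg_ge_def by simp
qed

lemma card_low_div_le_sum_inverse_outdeg:
  assumes "finite {j. E j v}" and "\<And>j. D j \<ge> 1" and "\<alpha> > 0"
  shows "real (card {j. E j v \<and> real (D j) < \<alpha>}) / \<alpha> \<le> (\<Sum>j\<in>{j. E j v}. 1 / real (D j))"
proof -
  let ?low = "{j. E j v \<and> real (D j) < \<alpha>}"
  have "real (card ?low) / \<alpha> = (\<Sum>j\<in>?low. 1 / \<alpha>)" by simp
  also have "\<dots> \<le> (\<Sum>j\<in>?low. 1 / real (D j))"
  proof (rule sum_mono)
    fix j assume "j \<in> ?low"
    then show "1 / \<alpha> \<le> 1 / real (D j)"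
      using assms(2)[of j] by (simp add: frac_le)
  qed
  also have "\<dots> \<le> (\<Sum>j\<in>{j. E j v}. 1 / real (D j))"
    using assms(1) by (intro sum_mono2) auto
  finally show ?thesis .
qed

lemma root_pagerank_gt_if_few_inneighbours_of_large_outdeg:
  assumes fin: "finite {j. E j v}" and D: "\<And>j. D j \<ge> 1"
    and c: "0 < c" "c < 1" and \<alpha>: "\<alpha> > 0" and \<epsilon>: "\<epsilon> > 0" and k: "0 \<le> k"
    and large: "real (indeg E v) > \<alpha> * k / (\<epsilon> * c * (1 - c))"
    and few: "\<not> real (indeg_ge E D \<alpha> v) \<ge> (1 - \<epsilon>) * real (indeg E v)"
  shows "ennreal k < root_pagerank c E D v"
proof -
  let ?low = "real (card {j. E j v \<and> real (D j) < \<alpha>})"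
  have cc: "c * (1 - c) > 0" using c by simp
  have "k = c * (1 - c) * (\<epsilon> * (\<alpha> * k / (\<epsilon> * c * (1 - c))) / \<alpha>)"
    using \<alpha> \<epsilon> c by (simp add: field_simps)
  also have "\<dots> < c * (1 - c) * (\<epsilon> * real (indeg E v) / \<alpha>)"
    using large \<alpha> \<epsilon> cc by (intro divide_strict_right_mono mult_strict_left_mono) auto
  also have "\<dots> < c * (1 - c) * (?low / \<alpha>)"
    using few indeg_eq_card_low_plus_indeg_ge[where E=E and v=v and D=D and \<alpha>=\<alpha>, OF fin] \<alpha> cc
    by (intro divide_strict_right_mono mult_strict_left_mono) (auto simp: algebra_simps)
  also have "\<dots> \<le> (1 - c) * c * (\<Sum>j\<in>{j. E j v}. 1 / real (D j))"
    using mult_left_mono[OF card_low_div_le_sum_inverse_outdeg[where E=E and v=v and D=D and \<alpha>=\<alpha>,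
          OF fin D \<alpha>] less_imp_le[OF cc]]
    by (simp add: mult.commute)
  finally have "ennreal k < ennreal ((1 - c) * c * (\<Sum>j\<in>{j. E j v}. 1 / real (D j)))"
    using k by (simp add: ennreal_less_iff)
  also have "\<dots> \<le> root_pagerank c E D v"
    using c by (intro root_pagerank_ge_first_step) auto
  finally show ?thesis .
qed

lemma borel_measurable_sum_random_finite_set:
  fixes f :: "nat \<Rightarrow> 'a \<Rightarrow> real"
  assumes fin: "\<And>\<omega>. \<omega> \<in> space M \<Longrightarrow> finite (S \<omega>)"
    and zero: "\<And>\<omega> k. \<omega> \<in> space M \<Longrightarrow> k \<notin> S \<omega> \<Longrightarrow> f k \<omega> = 0"
    and meas: "\<And>k. f k \<in> borel_measurable M"
  shows "(\<lambda>\<omega>. \<Sum>k\<in>S \<omega>. f k \<omega>) \<in> borel_measurable M"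
proof (rule borel_measurable_LIMSEQ_real[where u="\<lambda>n \<omega>. \<Sum>k<n. f k \<omega>"])
  fix \<omega> assume \<omega>: "\<omega> \<in> space M"
  obtain n\<^sub>0 where "S \<omega> \<subseteq> {..<n\<^sub>0}"
    using fin[OF \<omega>] finite_nat_bounded by blast
  then have "(\<Sum>k<n. f k \<omega>) = (\<Sum>k\<in>S \<omega>. f k \<omega>)" if "n \<ge> n\<^sub>0" for n
    using that by (intro sum.mono_neutral_right) (auto simp: zero[OF \<omega>])
  then show "(\<lambda>n. \<Sum>k<n. f k \<omega>) \<longlonglongrightarrow> (\<Sum>k\<in>S \<omega>. f k \<omega>)"
    by (intro tendsto_eventually) (auto simp: eventually_sequentially)
qed (use meas in measurable)

lemma measurable_count_space_if_level_sets:
  fixes g :: "'a \<Rightarrow> 'b::countable"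
  assumes "\<And>y. {x\<in>space M. g x = y} \<in> sets M"
  shows "g \<in> measurable M (count_space UNIV)"
  using assms by (auto simp: measurable_count_space_eq2_countable vimage_def Int_def conj_commute)

locale random_marked_digraph =
  fixes M :: "'w measure" and E :: "'w \<Rightarrow> nat \<Rightarrow> nat \<Rightarrow> bool" and D :: "'w \<Rightarrow> nat \<Rightarrow> nat"
  assumes measurable_edge[measurable]: "(\<lambda>\<omega>. E \<omega> i j) \<in> measurable M (count_space UNIV)"
    and measurable_mark[measurable]: "(\<lambda>\<omega>. D \<omega> j) \<in> measurable M (count_space UNIV)"
    and finite_inneighbours: "\<omega> \<in> space M \<Longrightarrow> finite {i. E \<omega> i j}"
begin

lemma finite_walkers: "\<omega> \<in> space M \<Longrightarrow> finite (walkers (E \<omega>) v s)"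
  using walkers_finite finite_inneighbours by blast

lemma measurable_pw[measurable]: "(\<lambda>\<omega>. pw (E \<omega>) (D \<omega>) v s j) \<in> borel_measurable M"
proof (induction s arbitrary: j)
  case (Suc s)
  have "(\<lambda>\<omega>. \<Sum>k\<in>{k\<in>walkers (E \<omega>) v s. E \<omega> j k}.
            if E \<omega> j k then pw (E \<omega>) (D \<omega>) v s k else 0) \<in> borel_measurable M"
    using Suc by (intro borel_measurable_sum_random_finite_set)
      (auto simp: finite_walkers pw_eq_0_outside_walkers)
  moreover have "(\<Sum>k\<in>{k\<in>walkers (E \<omega>) v s. E \<omega> j k}.
            if E \<omega> j k then pw (E \<omega>) (D \<omega>) v s k else 0) =
          (\<Sum>k\<in>{k\<in>walkers (E \<omega>) v s. E \<omega> j k}. pw (E \<omega>) (D \<omega>) v s k)" for \<omega>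
    by (intro sum.cong) auto
  ultimately show ?case by simp measurable
qed simp

lemma measurable_root_pagerank[measurable]:
  "(\<lambda>\<omega>. root_pagerank c (E \<omega>) (D \<omega>) v) \<in> borel_measurable M"
proof -
  have [measurable]: "(\<lambda>\<omega>. \<Sum>j\<in>walkers (E \<omega>) v s. pw (E \<omega>) (D \<omega>) v s j) \<in> borel_measurable M"
    for s
    by (rule borel_measurable_sum_random_finite_set)
      (auto simp: finite_walkers pw_eq_0_outside_walkers)
  show ?thesis unfolding root_pagerank_def by measurable
qed

lemma measurable_indeg[measurable]: "(\<lambda>\<omega>. real (indeg (E \<omega>) v)) \<in> borel_measurable M"
proof -
  have "(\<lambda>\<omega>. \<Sum>i\<in>{i. E \<omega> i v}. if E \<omega> i v then 1 else 0 :: real) \<in> borel_measurable M"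
    by (rule borel_measurable_sum_random_finite_set) (auto simp: finite_inneighbours)
  then show ?thesis unfolding indeg_def by simp
qed

lemma measurable_indeg_ge[measurable]:
  "(\<lambda>\<omega>. real (indeg_ge (E \<omega>) (D \<omega>) \<alpha> v)) \<in> borel_measurable M"
proof -
  have "(\<lambda>\<omega>. \<Sum>i\<in>{i. E \<omega> i v \<and> \<alpha> \<le> real (D \<omega> i)}.
      if E \<omega> i v \<and> \<alpha> \<le> real (D \<omega> i) then 1 else 0 :: real) \<in> borel_measurable M"
    by (rule borel_measurable_sum_random_finite_set)
      (auto intro: rev_finite_subset[OF finite_inneighbours])
  then show ?thesis unfolding indeg_ge_def by simp
qed

end

locale random_rooted_digraph = prob_space M + random_marked_digraph M E D
  for M :: "'w measure" and E D +
  fixes \<phi> :: "'w \<Rightarrow> nat"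
  assumes measurable_root: "\<phi> \<in> measurable M (count_space UNIV)"
    and mark_ge_1: "\<omega> \<in> space M \<Longrightarrow> D \<omega> j \<ge> 1"
begin

lemma measurable_at_root[measurable]:
  "(\<lambda>\<omega>. root_pagerank c (E \<omega>) (D \<omega>) (\<phi> \<omega>)) \<in> borel_measurable M"
  "(\<lambda>\<omega>. real (indeg (E \<omega>) (\<phi> \<omega>))) \<in> borel_measurable M"
  "(\<lambda>\<omega>. real (indeg_ge (E \<omega>) (D \<omega>) \<alpha> (\<phi> \<omega>))) \<in> borel_measurable M"
  using measurable_root
  by (rule measurable_compose_countable[OF measurable_root_pagerank]
      measurable_compose_countable[OF measurable_indeg]
      measurable_compose_countable[OF measurable_indeg_ge])+

lemma prob_root_pagerank_gt_ge:
  assumes c: "0 < c" "c < 1" and \<alpha>: "\<alpha> > 0" and \<epsilon>: "\<epsilon> > 0" and k: "0 \<le> k"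
  defines "K \<equiv> \<alpha> * k / (\<epsilon> * c * (1 - c))"
  shows "prob {\<omega>\<in>space M. real (indeg (E \<omega>) (\<phi> \<omega>)) > K}
       - prob {\<omega>\<in>space M. real (indeg (E \<omega>) (\<phi> \<omega>)) > K \<and>
           real (indeg_ge (E \<omega>) (D \<omega>) \<alpha> (\<phi> \<omega>)) \<ge> (1 - \<epsilon>) * real (indeg (E \<omega>) (\<phi> \<omega>))}
     \<le> prob {\<omega>\<in>space M. root_pagerank c (E \<omega>) (D \<omega>) (\<phi> \<omega>) > ennreal k}"
    (is "prob ?large - prob ?large_many \<le> prob ?R")
proof -
  have "?large - ?large_many \<subseteq> ?R"
  proof
    fix \<omega> assume \<omega>: "\<omega> \<in> ?large - ?large_many"
    then have "\<omega> \<in> space M" by simp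
    from root_pagerank_gt_if_few_inneighbours_of_large_outdeg[where E="E \<omega>" and D="D \<omega>"
        and v="\<phi> \<omega>", OF finite_inneighbours[OF this] mark_ge_1[OF this] c \<alpha> \<epsilon> k] \<omega>
    show "\<omega> \<in> ?R" by (auto simp: K_def)
  qed
  then show ?thesis
    by (subst finite_measure_Diff[symmetric]) (auto intro!: finite_measure_mono)
qed

end

lemma lower_bound_up_to_smallo:
  fixes f g e K :: "real \<Rightarrow> real"
  assumes "e \<in> o(g)" and "filterlim K at_top at_top"
    and "\<forall>\<^sub>F k in at_top. 0 \<le> f k \<and> g (K k) - e (K k) \<le> f k"
  shows "\<exists>h. (h \<longlongrightarrow> 0) at_top \<and> (\<forall>\<^sub>F k in at_top. (1 + h k) * g (K k) \<le> f k)"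
proof (intro exI conjI)
  let ?h = "\<lambda>k. - (e (K k) / g (K k))"
  have "((\<lambda>x. e x / g x) \<longlongrightarrow> 0) at_top"
    using assms(1) by (rule smalloD_tendsto)
  from filterlim_compose[OF this assms(2)] show "(?h \<longlongrightarrow> 0) at_top"
    using tendsto_minus by fastforce
  show "\<forall>\<^sub>F k in at_top. (1 + ?h k) * g (K k) \<le> f k"
    using assms(3) by eventually_elim (auto simp: field_simps)
qed

theorem mainTheorem14:
  fixes M :: "'w measure"
    and E :: "'w \<Rightarrow> nat \<Rightarrow> nat \<Rightarrow> bool" and D :: "'w \<Rightarrow> nat \<Rightarrow> nat" and \<phi> :: "'w \<Rightarrow> nat"
    and N :: "nat \<Rightarrow> nat" and A :: "nat \<Rightarrow> nat \<Rightarrow> nat \<Rightarrow> bool"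
    and c \<alpha> \<epsilon> :: real
  assumes "prob_space M"
    and meas_E: "\<And>i j. {\<omega>\<in>space M. E \<omega> i j} \<in> sets M"
    and meas_D: "\<And>j m. {\<omega>\<in>space M. D \<omega> j = m} \<in> sets M"
    and meas_phi: "\<And>i. {\<omega>\<in>space M. \<phi> \<omega> = i} \<in> sets M"
    and locfin: "\<And>\<omega> j. \<omega> \<in> space M \<Longrightarrow> finite {i. E \<omega> i j}"
    and outdeg_pos: "\<And>\<omega> j. \<omega> \<in> space M \<Longrightarrow> D \<omega> j \<ge> 1"
    and lwl: "local_weak_limit M E D \<phi> N A"
    and c: "0 < c" "c < 1"
    and \<alpha>: "\<alpha> > 0" and \<epsilon>: "\<epsilon> > 0"
    and hyp: "(\<lambda>k::real. measure M {\<omega>\<in>space M. real (indeg (E \<omega>) (\<phi> \<omega>)) > k \<and>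
                 real (indeg_ge (E \<omega>) (D \<omega>) \<alpha> (\<phi> \<omega>)) \<ge> (1 - \<epsilon>) * real (indeg (E \<omega>) (\<phi> \<omega>))})
              \<in> o(\<lambda>k::real. measure M {\<omega>\<in>space M. real (indeg (E \<omega>) (\<phi> \<omega>)) > k})"
  shows "\<exists>h :: real \<Rightarrow> real. (h \<longlongrightarrow> 0) at_top \<and>
           (\<forall>\<^sub>F k in at_top.
              measure M {\<omega>\<in>space M. root_pagerank c (E \<omega>) (D \<omega>) (\<phi> \<omega>) > ennreal k}
              \<ge> (1 + h k) * measure M {\<omega>\<in>space M.
                     real (indeg (E \<omega>) (\<phi> \<omega>)) > \<alpha> * k / (\<epsilon> * c * (1 - c))})"
proof -
  have "(\<lambda>\<omega>. E \<omega> i j) \<in> measurable M (count_space UNIV)" for i j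
    using meas_E[of i j] by (simp add: Measurable.pred_def)
  then interpret random_rooted_digraph M E D \<phi>
    using \<open>prob_space M\<close> meas_D meas_phi locfin outdeg_pos
    by (intro random_rooted_digraph.intro random_marked_digraph.intro random_rooted_digraph_axioms.intro
        measurable_count_space_if_level_sets) auto
  have "filterlim (\<lambda>k. \<alpha> / (\<epsilon> * c * (1 - c)) * k) at_top at_top"
    using \<alpha> \<epsilon> c by (intro filterlim_tendsto_pos_mult_at_top[OF tendsto_const _ filterlim_ident]) simp
  then have "filterlim (\<lambda>k. \<alpha> * k / (\<epsilon> * c * (1 - c))) at_top at_top" by simp
  moreover have "\<forall>\<^sub>F k in at_top.
      0 \<le> prob {\<omega>\<in>space M. root_pagerank c (E \<omega>) (D \<omega>) (\<phi> \<omega>) > ennreal k} \<and>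
      prob {\<omega>\<in>space M. real (indeg (E \<omega>) (\<phi> \<omega>)) > \<alpha> * k / (\<epsilon> * c * (1 - c))}
      - prob {\<omega>\<in>space M. real (indeg (E \<omega>) (\<phi> \<omega>)) > \<alpha> * k / (\<epsilon> * c * (1 - c)) \<and>
          real (indeg_ge (E \<omega>) (D \<omega>) \<alpha> (\<phi> \<omega>)) \<ge> (1 - \<epsilon>) * real (indeg (E \<omega>) (\<phi> \<omega>))}
      \<le> prob {\<omega>\<in>space M. root_pagerank c (E \<omega>) (D \<omega>) (\<phi> \<omega>) > ennreal k}"
    using prob_root_pagerank_gt_ge[OF c \<alpha> \<epsilon>]
    by (intro eventually_mono[OF eventually_ge_at_top[of 0]] conjI measure_nonneg)
  ultimately show ?thesis
    using lower_bound_up_to_smallo[OF hyp] by (simp add: mult.commute)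
qed

end
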